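(* Let $\textsc{All}$ denote the set of all languages $L \subseteq \{0,1\}^*$. Then $\mathrm{T}_s(\mathbb{Q}) = \textsc{All}$; that is, for every language $L \subseteq \{0,1\}^*$ there exists a transformer over the rational datatype $\mathbb{Q}$ with (strong) saturated attention, size-preserving embedding function and size-preserving activation functions, which recognizes $L$.
   Context: Datatypes. All values are binary strings. An integer is encoded as a sign bit followed by binary magnitude bits; an unsigned integer omits the sign bit. A rational $r \in \mathbb{Q}$ is encoded as a sign bit $s$ together with a pair $\langle p,q\rangle$ of unsigned integers (padded to equal length and interleaved), representing $(2s-1)p/q$; addition and multiplication are the usual ones followed by reduction to lowest terms ($p,q$ divided by $\gcd(p,q)$). The size $|x|$ of a value $x$ is its length in bits. A function $f:\{0,1\}^*\to\{0,1\}^*$ is size-preserving if there are constants $c,N$ such that $|f(x)| \le c|x|$ for all $x$ with $|x|\ge N$; $\mathcal S$ denotes the set of size-preserving functions (applied to numbers/vectors via their binary encodings; an input pair $(\sigma,i)\in\Sigma\times\mathbb N$ is likewise viewed as a bitstring). Saturated attention. For a score vector $a\in\mathbb D^n$ let $\mathcal M(a)=\{i : a_i=\max_j a_j\}$ and $s(a)_j = 1/|\mathcal M(a)|$ if $j\in\mathcal M(a)$ and $0$ otherwise. Transformer. Over datatype $\mathbb D$ with finite alphabet $\Sigma$, model dimension $k$, $L$ layers and $H$ heads per layer, a transformer consists of an embedding function $\phi:\Sigma\times\mathbb N\to\mathbb D^k$ in $\mathcal S$, scoring functions $s_{\ell,h}:\mathbb D^k\times\mathbb D^k\to\mathbb D$,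 and activation functions $f_\ell$ in $\mathcal S$. On input $w\in\Sigma^n$: $v_{0,i}=\phi(w_i,i)$; $a_{\ell,h,i,j}=s_{\ell,h}(v_{\ell,i},v_{\ell,j})$; the head output is $b_{\ell+1,h,i}=\sum_{j=1}^n \alpha(a_{\ell,h,i,\cdot})_j\, v_{\ell,j}$ with $\alpha$ the attention function and all arithmetic in $\mathbb D$; and $v_{\ell+1,i}=f_{\ell+1}(v_{\ell,i}, b_{\ell+1,1,i},\dots,b_{\ell+1,H,i})$. The transformer recognizes $L\subseteq\Sigma^*$ if there is a rational affine map $W,b$ with $W\cdot v_{L,1}(w)+b>0 \iff w\in L$ for all $w\in\Sigma^*$. $\mathrm T_\alpha(\mathbb D)$ is the class of languages recognized by some such transformer with attention function $\alpha$, datatype $\mathbb D$, some $k$, and embedding and activation functions in $\mathcal S$. *)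

theory Defs
  imports Complex_Main
begin

fun nat_bits :: "nat \<Rightarrow> bool list" where
  "nat_bits n = (if n = 0 then [] else nat_bits (n div 2) @ [odd n])"

declare nat_bits.simps[simp del]

definition pad_to :: "nat \<Rightarrow> bool list \<Rightarrow> bool list" where
  "pad_to m xs = replicate (m - length xs) False @ xs"

fun interleave :: "bool list \<Rightarrow> bool list \<Rightarrow> bool list" where
  "interleave (x # xs) (y # ys) = x # y # interleave xs ys"
| "interleave _ _ = []"

text \<open>Rational r = (2s-1) p/q in lowest terms (q > 0): sign bit s (True = nonnegative),
  followed by p and q padded to equal length and interleaved.\<close>
definition enc_rat :: "rat \<Rightarrow> bool list" where
  "enc_rat r = (let (p, q) = quotient_of r;
                    bp = nat_bits (nat \<bar>p\<bar>); bq = nat_bits (nat q);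
                    m = max (length bp) (length bq)
                in (0 \<le> p) # interleave (pad_to m bp) (pad_to m bq))"

text \<open>Self-delimiting encoding of a finite sequence of bitstrings
  (each bit doubled, each item terminated by 01).\<close>
definition enc_seq :: "bool list list \<Rightarrow> bool list" where
  "enc_seq ws = concat (map (\<lambda>w. concat (map (\<lambda>b. [b, b]) w) @ [False, True]) ws)"

definition enc_vec :: "rat list \<Rightarrow> bool list" where
  "enc_vec v = enc_seq (map enc_rat v)"

definition enc_sym_pos :: "bool \<times> nat \<Rightarrow> bool list" where
  "enc_sym_pos x = fst x # nat_bits (snd x)"

definition enc_act_in :: "rat list \<times> rat list list \<Rightarrow> bool list" where
  "enc_act_in x = enc_seq (map enc_vec (fst x # snd x))"

definition size_preserving :: "('a \<Rightarrow> bool list) \<Rightarrow> ('b \<Rightarrow> bool list) \<Rightarrow> ('a \<Rightarrow> 'b) \<Rightarrow> bool" where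
  "size_preserving ein eout g \<longleftrightarrow>
     (\<exists>c N::nat. \<forall>x. length (ein x) \<ge> N \<longrightarrow> length (eout (g x)) \<le> c * length (ein x))"

definition vscale :: "rat \<Rightarrow> rat list \<Rightarrow> rat list" where
  "vscale c v = map (\<lambda>x. c * x) v"

definition vadd :: "rat list \<Rightarrow> rat list \<Rightarrow> rat list" where
  "vadd u v = map2 (+) u v"

definition dotp :: "rat list \<Rightarrow> rat list \<Rightarrow> rat" where
  "dotp u v = sum_list (map2 (*) u v)"

definition saturated :: "rat list \<Rightarrow> rat list" where
  "saturated a = (let m = Max (set a); c = length (filter (\<lambda>y. y = m) a)
                  in map (\<lambda>x. if x = m then 1 / of_nat c else 0) a)"

text \<open>Layers are 0..L-1 for scores (score l h uses v_l) and activation (act (l+1)) produces v_{l+1};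
  heads are 0..H-1; positions are 1-based in the embedding.\<close>
record transformer =
  dim :: nat
  nlayers :: nat
  nheads :: nat
  emb :: "bool \<Rightarrow> nat \<Rightarrow> rat list"
  score :: "nat \<Rightarrow> nat \<Rightarrow> rat list \<Rightarrow> rat list \<Rightarrow> rat"
  act :: "nat \<Rightarrow> rat list \<Rightarrow> rat list list \<Rightarrow> rat list"

definition head_out :: "transformer \<Rightarrow> nat \<Rightarrow> nat \<Rightarrow> rat list list \<Rightarrow> nat \<Rightarrow> rat list" where
  "head_out T l h vs i =
     (let n = length vs;
          a = map (\<lambda>j. score T l h (vs ! i) (vs ! j)) [0..<n];
          w = saturated a
      in foldl (\<lambda>acc j. vadd acc (vscale (w ! j) (vs ! j))) (replicate (dim T) 0) [0..<n])"

definition layer :: "transformer \<Rightarrow> nat \<Rightarrow> rat list list \<Rightarrow> rat list list" where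
  "layer T l vs = map (\<lambda>i. act T (Suc l) (vs ! i) (map (\<lambda>h. head_out T l h vs i) [0..<nheads T]))
                      [0..<length vs]"

definition run :: "transformer \<Rightarrow> bool list \<Rightarrow> rat list list" where
  "run T w = foldl (\<lambda>vs l. layer T l vs)
                   (map (\<lambda>i. emb T (w ! i) (Suc i)) [0..<length w]) [0..<nlayers T]"

text \<open>v_{L,1}; for the empty word (no positions) we use the zero vector by convention.\<close>
definition final_vec :: "transformer \<Rightarrow> bool list \<Rightarrow> rat list" where
  "final_vec T w = (if w = [] then replicate (dim T) 0 else hd (run T w))"

definition admissible :: "transformer \<Rightarrow> bool" where
  "admissible T \<longleftrightarrow>
     (\<forall>\<sigma> i. length (emb T \<sigma> i) = dim T) \<and>
     (\<forall>l\<in>{1..nlayers T}. \<forall>v bs. length (act T l v bs) = dim T) \<and>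
     size_preserving enc_sym_pos enc_vec (\<lambda>x. emb T (fst x) (snd x)) \<and>
     (\<forall>l\<in>{1..nlayers T}. size_preserving enc_act_in enc_vec (\<lambda>x. act T l (fst x) (snd x)))"

definition recognizes :: "transformer \<Rightarrow> bool list set \<Rightarrow> bool" where
  "recognizes T L \<longleftrightarrow>
     (\<exists>W (b::rat). length W = dim T \<and> (\<forall>w. dotp W (final_vec T w) + b > 0 \<longleftrightarrow> w \<in> L))"

end

theory Submission
  imports Defs "HOL-Computational_Algebra.Primes" "HOL-Library.Infinite_Set"
begin

(* Embed symbol sigma at position i as (sigma / p_i, [i = 1]), p_i the i-th prime. One head with
   constant score averages all positions, which yields (1/n) * (sum of 1/p_j over the positions j
   carrying a 1) together with 1/n. Sums of reciprocals of distinct primes are distinct, so this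
   average determines the word, and an activation function that is a lookup table for L decides
   membership. The embedding is size-preserving because p_i is polynomial in i, a consequence of
   the Chebyshev-type bound 4^m <= 2 (2m)^pi(2m) (pi counting primes), which we derive from
   Nair's observation that m * binomial (m + r) m divides every common multiple of m, ..., m + r. *)

lemma alternating_binomial_reciprocal_sum:
  assumes "m \<ge> 1"
  shows "(\<Sum>k\<le>r. (-1)^k * of_nat (r choose k) / of_nat (m + k) :: 'a :: field_char_0)
         = fact (m - 1) * fact r / fact (m + r)"
  using assms
proof (induction r arbitrary: m)
  case 0
  then show ?case by (cases m) (simp_all add: fact_Suc del: of_nat_Suc)
next
  case (Suc r)
  define g :: "nat \<Rightarrow> nat \<Rightarrow> 'a" where "g m k = (-1)^k * of_nat (r choose k) / of_nat (m + k)" for m k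
  obtain m' where m': "m = Suc m'" using Suc.prems by (cases m) auto
  have "(\<Sum>k\<le>Suc r. (-1)^k * of_nat (Suc r choose k) / of_nat (m + k) :: 'a)
      = (\<Sum>k\<le>r. g m k) - (\<Sum>k\<le>r. g (Suc m) k)"
  proof -
    have "(\<Sum>k\<le>r. (-1)^Suc k * of_nat (Suc r choose Suc k) / of_nat (m + Suc k) :: 'a)
       = (\<Sum>k\<le>r. g m (Suc k) - g (Suc m) k)"
      by (rule sum.cong) (simp_all add: g_def binomial_Suc_Suc field_simps del: of_nat_Suc)
    moreover have "(\<Sum>k\<le>Suc r. g m k) = g m 0 + (\<Sum>k\<le>r. g m (Suc k))"
      by (rule sum.atMost_Suc_shift)
    moreover have "(\<Sum>k\<le>Suc r. g m k) = (\<Sum>k\<le>r. g m k)"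
      by (simp add: g_def)
    ultimately show ?thesis
      by (subst sum.atMost_Suc_shift) (simp add: sum_subtractf g_def)
  qed
  also have "\<dots> = fact (m - 1) * fact r / fact (m + r) - fact (Suc m - 1) * fact r / fact (Suc m + r)"
    unfolding g_def using Suc.IH[of m] Suc.IH[of "Suc m"] Suc.prems by simp
  also have "\<dots> = fact (m - 1) * fact (Suc r) / fact (m + Suc r)"
    by (simp add: m' fact_Suc field_simps del: of_nat_Suc) (simp add: algebra_simps)
  finally show ?case .
qed

lemma mult_binomial_dvd:
  fixes M :: nat
  assumes m: "m \<ge> 1" and dvd: "\<And>k. m \<le> k \<Longrightarrow> k \<le> m + r \<Longrightarrow> k dvd M"
  shows "m * (m + r choose m) dvd M"
proof -
  define C where "C = m + r choose m"
  have "fact (m + r) = (fact m * fact r * C :: nat)"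
    using binomial_fact_lemma[of m "m + r"] by (simp add: C_def)
  moreover have "fact m = (of_nat m * fact (m - 1) :: rat)"
    using m by (cases m) auto
  ultimately have "fact (m + r) = (of_nat m * of_nat C * (fact (m - 1) * fact r) :: rat)"
    by (metis (mono_tags) of_nat_fact of_nat_mult mult.commute mult.left_commute)
  then have key: "fact (m - 1) * fact r / fact (m + r) = (1 / (of_nat m * of_nat C) :: rat)"
    using m by (simp add: C_def field_simps)
  \<comment> \<open>By the identity above, \<open>M / (m * C)\<close> is the integer \<open>z\<close>.\<close>
  define z where "z = (\<Sum>k\<le>r. (-1)^k * int (r choose k) * int (M div (m + k)))"
  have "(of_int z :: rat) = (\<Sum>k\<le>r. of_nat M * ((-1)^k * of_nat (r choose k) / of_nat (m + k)))"
    unfolding z_def of_int_sum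
  proof (rule sum.cong)
    fix k assume "k \<in> {..r}"
    then have "(m + k) dvd M" using dvd[of "m + k"] by simp
    then show "of_int ((-1)^k * int (r choose k) * int (M div (m + k)))
       = (of_nat M * ((-1)^k * of_nat (r choose k) / of_nat (m + k)) :: rat)"
      using m by (auto simp del: of_nat_add)
  qed simp
  also have "\<dots> = of_nat M / (of_nat m * of_nat C)"
    unfolding sum_distrib_left[symmetric] alternating_binomial_reciprocal_sum[OF m] key by simp
  finally have "(of_int (int M) :: rat) = of_int (z * int (m * C))"
    using m by (simp add: C_def field_simps)
  then have "int M = z * int (m * C)"
    by (simp only: of_int_eq_iff)
  then show ?thesis
    by (metis C_def dvd_triv_right of_nat_dvd_iff)
qed

lemma Lcm_atLeastAtMost_le_pow_card_primes:
  "Lcm {1..N} \<le> N ^ card {p. prime p \<and> p \<le> N}" for N :: nat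
proof -
  define P where "P = {p. prime p \<and> p \<le> N}"
  define e where "e p = Max (multiplicity p ` {1..N})" for p
  define Q where "Q = (\<Prod>p\<in>P. p ^ e p)"
  have fin: "finite P" by (simp add: P_def)
  have power_le: "p ^ e p \<le> N" if "p \<in> P" for p
  proof -
    have "e p \<in> multiplicity p ` {1..N}"
      unfolding e_def using that prime_gt_0_nat[of p] by (intro Max_in) (auto simp: P_def)
    then obtain k where k: "k \<in> {1..N}" "e p = multiplicity p k" by auto
    have "p ^ multiplicity p k \<le> k" using k by (intro dvd_imp_le multiplicity_dvd) auto
    then show ?thesis using k by simp
  qed
  have "k dvd Q" if k: "k \<in> {1..N}" for k
  proof (rule multiplicity_le_imp_dvd)
    show "k \<noteq> 0" using k by simp
    fix p :: nat assume p: "prime p"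
    show "multiplicity p k \<le> multiplicity p Q"
    proof (cases "p \<le> N")
      case True
      have "multiplicity p Q = e p"
        unfolding Q_def using True p fin by (subst multiplicity_prod_prime_powers) (auto simp: P_def)
      moreover have "multiplicity p k \<le> e p"
        unfolding e_def using k by (intro Max_ge) auto
      ultimately show ?thesis by simp
    next
      case False
      then have "\<not> p dvd k" using k by (auto dest: dvd_imp_le)
      then show ?thesis by (simp add: not_dvd_imp_multiplicity_0)
    qed
  qed
  then have "Lcm {1..N} \<le> Q"
    by (intro dvd_imp_le Lcm_least) (auto simp: Q_def P_def prime_gt_0_nat intro!: prod_pos)
  also have "Q \<le> (\<Prod>p\<in>P. N)"
    unfolding Q_def by (intro prod_mono conjI power_le) auto
  finally show ?thesis by (simp add: P_def)
qed

lemma four_pow_le_card_primes: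
  assumes m: "m \<ge> 1"
  shows "4 ^ m \<le> 2 * (2 * m) ^ card {p. prime p \<and> p \<le> 2 * m}"
proof -
  have "m * (m + m choose m) dvd Lcm {1..2 * m}"
    using m by (intro mult_binomial_dvd) auto
  moreover have "0 < Lcm {1..2 * m}" by (intro gr0I) simp
  ultimately have "m * (2 * m choose m) \<le> Lcm {1..2 * m}"
    by (simp add: mult_2 dvd_imp_le del: Lcm_0_iff_nat)
  also have "\<dots> \<le> (2 * m) ^ card {p. prime p \<and> p \<le> 2 * m}"
    by (rule Lcm_atLeastAtMost_le_pow_card_primes)
  finally have binomial_le: "m * (2 * m choose m) \<le> (2 * m) ^ card {p. prime p \<and> p \<le> 2 * m}" .
  have "4 ^ m \<le> 2 * real m * real (2 * m choose m)"
    using central_binomial_lower_bound[of m] m by (simp add: field_simps)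
  also have "\<dots> \<le> 2 * real ((2 * m) ^ card {p. prime p \<and> p \<le> 2 * m})"
    using binomial_le by (simp flip: of_nat_mult)
  finally have "real (4 ^ m) \<le> real (2 * (2 * m) ^ card {p. prime p \<and> p \<le> 2 * m})"
    by simp
  then show ?thesis by (simp only: of_nat_le_iff)
qed

lemma less_card_primes_le_pow:
  assumes j: "j < 2 ^ b"
  shows "j < card {p :: nat. prime p \<and> p \<le> 2 ^ (2 * b + 1)}"
proof (rule ccontr)
  define c where "c = card {p :: nat. prime p \<and> p \<le> 2 ^ (2 * b + 1)}"
  assume "\<not> j < c"
  then have "c + 1 \<le> 2 ^ b" using j by simp
  have double: "2 * 4 ^ b = (2::nat) ^ (2 * b + 1)"
    by (simp add: power_add power_mult)
  have "(2::nat) ^ (2 * 4 ^ b) = 4 ^ 4 ^ b"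
    by (simp add: power_mult)
  also have "\<dots> \<le> 2 * (2 ^ (2 * b + 1)) ^ c"
    using four_pow_le_card_primes[of "4 ^ b", unfolded double, folded c_def] by simp
  also have "\<dots> = 2 ^ (1 + (2 * b + 1) * c)"
    by (simp only: power_add power_one_right power_mult)
  finally have upper: "2 * 4 ^ b \<le> 1 + (2 * b + 1) * c"
    by (rule power_le_imp_le_exp[rotated]) simp
  have "2 * b + 1 \<le> (2::nat) ^ (b + 1)"
    using less_exp[of b] by (simp del: less_exp)
  then have "(2 * b + 1) * (c + 1) \<le> 2 ^ (b + 1) * 2 ^ b"
    using \<open>c + 1 \<le> 2 ^ b\<close> by (intro mult_mono) auto
  also have "\<dots> = 2 * 4 ^ b"
    by (simp add: power_add power_mult_distrib[symmetric] mult.commute)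
  finally have "b = 0" using upper by (simp add: algebra_simps)
  then show False using upper \<open>c + 1 \<le> 2 ^ b\<close> by simp
qed

definition nth_prime :: "nat \<Rightarrow> nat" where
  "nth_prime = enumerate {p. prime p}"

lemma prime_nth_prime: "prime (nth_prime j)"
  unfolding nth_prime_def using enumerate_in_set[OF primes_infinite] by blast

lemma strict_mono_nth_prime: "strict_mono nth_prime"
  unfolding nth_prime_def strict_mono_def using primes_infinite by simp

lemma range_nth_prime: "range nth_prime = {p. prime p}"
  unfolding nth_prime_def by (rule range_enumerate[OF primes_infinite])

lemma nth_prime_le:
  assumes "j < card {p. prime p \<and> p \<le> N}"
  shows "nth_prime j \<le> N"
proof (rule ccontr)
  assume "\<not> nth_prime j \<le> N"
  have "p \<in> nth_prime ` {..<j}" if p: "prime p" "p \<le> N" for p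
  proof -
    obtain k where k: "p = nth_prime k"
      using p range_nth_prime by blast
    have "nth_prime k < nth_prime j"
      using \<open>\<not> nth_prime j \<le> N\<close> p k by simp
    then have "k < j"
      using strict_mono_less[OF strict_mono_nth_prime] by blast
    then show ?thesis using k by blast
  qed
  then have "{p. prime p \<and> p \<le> N} \<subseteq> nth_prime ` {..<j}"
    by blast
  then have "card {p. prime p \<and> p \<le> N} \<le> card (nth_prime ` {..<j})"
    by (intro card_mono) auto
  also have "\<dots> \<le> j"
    using card_image_le[of "{..<j}" nth_prime] by simp
  finally show False using assms by simp
qed

lemma nth_prime_le_pow:
  "j < 2 ^ b \<Longrightarrow> nth_prime j \<le> 2 ^ (2 * b + 1)"
  by (intro nth_prime_le less_card_primes_le_pow)

lemma sum_inverse_primes_eq_imp_subset: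
  fixes A B :: "nat set"
  assumes fin: "finite A" "finite B" and primes: "\<And>p. p \<in> A \<union> B \<Longrightarrow> prime p"
    and eq: "(\<Sum>p\<in>A. 1 / of_nat p :: rat) = (\<Sum>p\<in>B. 1 / of_nat p)"
  shows "A \<subseteq> B"
proof
  fix p assume "p \<in> A"
  show "p \<in> B"
  proof (rule ccontr)
    assume "p \<notin> B"
    define S where "S = A \<union> B"
    define R where "R q = (\<Prod>r\<in>S - {q}. r)" for q
    have finS: "finite S" using fin by (simp add: S_def)
    have R_eq: "of_nat (R q) = (of_nat (\<Prod>S) / of_nat q :: rat)" if "q \<in> S" for q
    proof -
      have "\<Prod>S = q * R q" unfolding R_def using finS that by (simp add: prod.remove)
      moreover have "q \<noteq> 0" using primes[of q] that by (auto simp: S_def)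
      ultimately show ?thesis by simp
    qed
    have cleared: "(of_nat (\<Sum>q\<in>C. R q) :: rat) = of_nat (\<Prod>S) * (\<Sum>q\<in>C. 1 / of_nat q)"
      if "C \<subseteq> S" for C
      unfolding of_nat_sum sum_distrib_left using that by (intro sum.cong) (auto simp: R_eq)
    have "(of_nat (\<Sum>q\<in>A. R q) :: rat) = of_nat (\<Sum>q\<in>B. R q)"
      unfolding cleared[of A, OF Un_upper1[of A B, folded S_def]]
        cleared[of B, OF Un_upper2[of B A, folded S_def]] eq ..
    then have "(\<Sum>q\<in>A. R q) = (\<Sum>q\<in>B. R q)"
      by (simp only: of_nat_eq_iff)
    moreover have p_dvd: "p dvd R q" if "q \<in> S" "q \<noteq> p" for q
      unfolding R_def using finS that \<open>p \<in> A\<close> by (intro dvd_prodI) (auto simp: S_def)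
    ultimately have "p dvd R p + (\<Sum>q\<in>A - {p}. R q)"
      using \<open>p \<in> A\<close> \<open>p \<notin> B\<close> fin by (auto simp: sum.remove[symmetric] S_def intro!: dvd_sum)
    moreover have "p dvd (\<Sum>q\<in>A - {p}. R q)"
      using p_dvd by (intro dvd_sum) (auto simp: S_def)
    ultimately have "p dvd R p"
      by (simp add: dvd_add_left_iff)
    then obtain q where q: "q \<in> S - {p}" "p dvd q"
      unfolding R_def using primes \<open>p \<in> A\<close> finS by (subst (asm) prime_dvd_prod_iff) (auto simp: S_def)
    then have "p = q"
      using primes \<open>p \<in> A\<close> by (intro primes_dvd_imp_eq) (auto simp: S_def)
    then show False
      using q by simp
  qed
qed

lemma sum_inverse_primes_inj:
  fixes A B :: "nat set"
  assumes "finite A" "finite B" "\<And>p. p \<in> A \<union> B \<Longrightarrow> prime p"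
    and "(\<Sum>p\<in>A. 1 / of_nat p :: rat) = (\<Sum>p\<in>B. 1 / of_nat p)"
  shows "A = B"
  using assms by (intro equalityI sum_inverse_primes_eq_imp_subset) auto

lemma sum_inverse_nth_primes_inj:
  assumes len: "length w = length w'"
    and eq: "(\<Sum>j<length w. if w ! j then 1 / of_nat (nth_prime (Suc j)) else 0 :: rat)
           = (\<Sum>j<length w'. if w' ! j then 1 / of_nat (nth_prime (Suc j)) else 0)"
  shows "w = w'"
proof -
  define ones where "ones u = {j. j < length u \<and> u ! j}" for u :: "bool list"
  define code where "code u = (\<lambda>j. nth_prime (Suc j)) ` ones u" for u
  have inj: "inj (\<lambda>j. nth_prime (Suc j))"
    using strict_mono_eq[OF strict_mono_nth_prime] by (simp add: inj_def)
  have sum_code: "(\<Sum>j<length u. if u ! j then 1 / of_nat (nth_prime (Suc j)) else 0 :: rat)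
      = (\<Sum>p\<in>code u. 1 / of_nat p)" for u
  proof -
    have "ones u = {j \<in> {..<length u}. u ! j}" by (auto simp: ones_def)
    then have "(\<Sum>p\<in>code u. 1 / of_nat p :: rat)
        = (\<Sum>j\<in>{j \<in> {..<length u}. u ! j}. 1 / of_nat (nth_prime (Suc j)))"
      unfolding code_def by (simp add: sum.reindex inj_on_subset[OF inj])
    also have "\<dots> = (\<Sum>j<length u. if u ! j then 1 / of_nat (nth_prime (Suc j)) else 0)"
      by (rule sum.inter_filter) simp
    finally show ?thesis ..
  qed
  have "code w = code w'"
    using eq unfolding sum_code
    by (intro sum_inverse_primes_inj) (auto simp: code_def ones_def prime_nth_prime)
  then have "ones w = ones w'"
    unfolding code_def using inj by (simp add: inj_image_eq_iff)
  then show ?thesis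
    using len by (intro nth_equalityI) (auto simp: ones_def set_eq_iff)
qed

lemma nat_bits_0 [simp]: "nat_bits 0 = []"
  by (simp add: nat_bits.simps)

lemma nat_bits_Suc_0 [simp]: "nat_bits (Suc 0) = [True]"
  by (simp add: nat_bits.simps)

lemma less_pow_length_nat_bits: "n < 2 ^ length (nat_bits n)"
proof (induction n rule: nat_bits.induct)
  case (1 n)
  then show ?case
    by (cases "n = 0") (simp_all add: nat_bits.simps[of n])
qed

lemma length_nat_bits_le: "n < 2 ^ k \<Longrightarrow> length (nat_bits n) \<le> k"
proof (induction n arbitrary: k rule: nat_bits.induct)
  case (1 n)
  show ?case
  proof (cases "n = 0")
    case False
    then obtain k' where k: "k = Suc k'" using "1.prems" by (cases k) auto
    then have "length (nat_bits (n div 2)) \<le> k'" using 1 False by simp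
    then show ?thesis using False k by (simp add: nat_bits.simps[of n])
  qed simp
qed

lemma length_interleave: "length (interleave xs ys) = 2 * min (length xs) (length ys)"
  by (induction xs ys rule: interleave.induct) auto

lemma length_enc_rat:
  "length (enc_rat r) = 1 + 2 * max (length (nat_bits (nat \<bar>fst (quotient_of r)\<bar>)))
                                    (length (nat_bits (nat (snd (quotient_of r)))))"
  by (cases "quotient_of r") (simp add: enc_rat_def Let_def length_interleave pad_to_def)

lemma length_enc_vec: "length (enc_vec v) = (\<Sum>r\<leftarrow>v. 2 * length (enc_rat r) + 2)"
proof -
  have "length (concat (map (\<lambda>b. [b, b]) w)) = 2 * length w" for w :: "bool list"
    by (induction w) auto
  then show ?thesis
    by (induction v) (simp_all add: enc_vec_def enc_seq_def)
qed

lemma length_enc_rat_inverse: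
  assumes "p > 0"
  shows "length (enc_rat (1 / of_nat p)) = 1 + 2 * max 1 (length (nat_bits p))"
proof -
  have "1 / (of_nat p :: rat) = Fract 1 (int p)" by (simp add: Fract_of_int_quotient)
  then have "quotient_of (1 / of_nat p) = (1, int p)" using assms by (simp add: quotient_of_Fract)
  then show ?thesis by (simp add: length_enc_rat)
qed

lemma length_enc_rat_sign: "x \<in> {-1, 0, 1} \<Longrightarrow> length (enc_rat x) = 3"
  by (auto simp: length_enc_rat)

lemma size_preserving_bounded:
  "(\<And>x. length (eout (g x)) \<le> B) \<Longrightarrow> size_preserving ein eout g"
  unfolding size_preserving_def
  by (rule exI[of _ B], rule exI[of _ 1]) (metis mult.right_neutral mult_le_mono2 order_trans)

lemma saturated_replicate:
  "n > 0 \<Longrightarrow> saturated (replicate n c) = replicate n (1 / of_nat n)"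
  by (simp add: saturated_def Let_def map_replicate_const)

lemma foldl_vadd_vscale:
  assumes "\<And>j. j < n \<Longrightarrow> length (f j) = d"
  shows "foldl (\<lambda>acc j. vadd acc (vscale (c j) (f j))) (replicate d 0) [0..<n]
         = map (\<lambda>k. \<Sum>j<n. c j * f j ! k) [0..<d]"
  using assms
proof (induction n)
  case (Suc n)
  then show ?case
    by (intro nth_equalityI) (simp_all add: vadd_def vscale_def)
qed (simp add: map_replicate_const)

lemma head_out_constant_score:
  assumes "score T l h = (\<lambda>u v. c)" and "vs \<noteq> []"
    and "\<And>v. v \<in> set vs \<Longrightarrow> length v = dim T"
  shows "head_out T l h vs i = map (\<lambda>k. (\<Sum>j<length vs. vs ! j ! k) / of_nat (length vs)) [0..<dim T]"
proof -
  have "map (\<lambda>j. score T l h (vs ! i) (vs ! j)) [0..<length vs] = replicate (length vs) c"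
    using assms(1) by (simp add: map_replicate_const)
  then show ?thesis
    using assms(2,3) unfolding head_out_def Let_def
    by (simp add: saturated_replicate foldl_vadd_vscale sum_divide_distrib)
qed

definition prime_emb :: "bool \<Rightarrow> nat \<Rightarrow> rat list" where
  "prime_emb \<sigma> i = [if \<sigma> then 1 / of_nat (nth_prime i) else 0, if i = 1 then 1 else 0]"

definition mean_prime_emb :: "bool list \<Rightarrow> rat list" where
  "mean_prime_emb w =
     [(\<Sum>j<length w. if w ! j then 1 / of_nat (nth_prime (Suc j)) else 0) / of_nat (length w),
      1 / of_nat (length w)]"

lemma mean_prime_emb_inj:
  assumes "w \<noteq> []" "w' \<noteq> []" "mean_prime_emb w = mean_prime_emb w'"
  shows "w = w'"
proof -
  have "length w = length w'"
    using assms(3) by (simp add: mean_prime_emb_def)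
  with assms show ?thesis
    by (intro sum_inverse_nth_primes_inj) (simp_all add: mean_prime_emb_def)
qed

definition lookup_transformer :: "bool list set \<Rightarrow> transformer" where
  "lookup_transformer L =
     \<lparr>dim = 2, nlayers = 1, nheads = 1, emb = prime_emb, score = (\<lambda>l h u v. 0),
      act = (\<lambda>l v bs. [if \<exists>w\<in>L. w \<noteq> [] \<and> bs = [mean_prime_emb w] then 1 else -1, 0])\<rparr>"

lemma head_out_lookup_transformer:
  assumes "w \<noteq> []"
  shows "head_out (lookup_transformer L) 0 0 (map (\<lambda>i. prime_emb (w ! i) (Suc i)) [0..<length w]) 0
         = mean_prime_emb w"
proof -
  have "head_out (lookup_transformer L) 0 0 (map (\<lambda>i. prime_emb (w ! i) (Suc i)) [0..<length w]) 0
      = map (\<lambda>k. (\<Sum>j<length w. prime_emb (w ! j) (Suc j) ! k) / of_nat (length w)) [0..<2]"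
    using assms
    by (subst head_out_constant_score) (auto simp: lookup_transformer_def prime_emb_def intro!: sum.cong)
  also have "\<dots> = mean_prime_emb w"
  proof -
    have "(\<Sum>j<length w. prime_emb (w ! j) (Suc j) ! 1) = (\<Sum>j<length w. if j = 0 then 1 else 0 :: rat)"
      by (intro sum.cong) (auto simp: prime_emb_def)
    then show ?thesis
      using assms by (simp add: mean_prime_emb_def prime_emb_def numeral_2_eq_2 upt_rec)
  qed
  finally show ?thesis .
qed

lemma final_vec_lookup_transformer:
  assumes "w \<noteq> []"
  shows "final_vec (lookup_transformer L) w = [if w \<in> L then 1 else -1, 0]"
proof -
  define vs where "vs = map (\<lambda>i. prime_emb (w ! i) (Suc i)) [0..<length w]"
  have "run (lookup_transformer L) w = layer (lookup_transformer L) 0 vs"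
    by (simp add: run_def vs_def lookup_transformer_def)
  then have "final_vec (lookup_transformer L) w
      = act (lookup_transformer L) 1 (vs ! 0) [head_out (lookup_transformer L) 0 0 vs 0]"
    using assms by (simp add: final_vec_def layer_def vs_def upt_conv_Cons lookup_transformer_def)
  also have "\<dots> = [if w \<in> L then 1 else -1, 0]"
    unfolding vs_def head_out_lookup_transformer[OF assms]
    using assms mean_prime_emb_inj[of w] by (auto simp: lookup_transformer_def)
  finally show ?thesis .
qed

lemma recognizes_lookup_transformer: "recognizes (lookup_transformer L) L"
  unfolding recognizes_def
proof (intro exI[of _ "[1, 0]"] exI[of _ "if [] \<in> L then 1/2 else -1/2"] conjI allI)
  show "length [1, 0 :: rat] = dim (lookup_transformer L)"
    by (simp add: lookup_transformer_def)
  fix w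
  show "0 < dotp [1, 0] (final_vec (lookup_transformer L) w) + (if [] \<in> L then 1/2 else -1/2)
        \<longleftrightarrow> w \<in> L"
  proof (cases "w = []")
    case True
    \<comment> \<open>The empty word has no positions; its final vector is zero and the bias alone decides it.\<close>
    then show ?thesis by (simp add: final_vec_def lookup_transformer_def dotp_def numeral_2_eq_2)
  next
    case False
    then show ?thesis by (simp add: final_vec_lookup_transformer dotp_def)
  qed
qed

lemma length_enc_vec_prime_emb:
  "length (enc_vec (prime_emb \<sigma> i)) \<le> 20 * length (enc_sym_pos (\<sigma>, i))"
proof -
  define b where "b = length (nat_bits i)"
  have "nth_prime i \<le> 2 ^ (2 * b + 1)"
    unfolding b_def by (rule nth_prime_le_pow[OF less_pow_length_nat_bits])
  then have "nth_prime i < 2 ^ (2 * b + 2)"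
    by (rule le_less_trans) simp
  then have "length (nat_bits (nth_prime i)) \<le> 2 * b + 2"
    by (rule length_nat_bits_le)
  moreover have "nth_prime i > 0"
    using prime_gt_0_nat[OF prime_nth_prime] .
  ultimately have "length (enc_rat (if \<sigma> then 1 / of_nat (nth_prime i) else 0)) \<le> 4 * b + 5"
    by (auto simp: length_enc_rat_inverse length_enc_rat_sign)
  then show ?thesis
    by (simp add: length_enc_vec prime_emb_def length_enc_rat_sign enc_sym_pos_def b_def)
qed

lemma admissible_lookup_transformer: "admissible (lookup_transformer L)"
proof -
  have "size_preserving enc_sym_pos enc_vec (\<lambda>x. prime_emb (fst x) (snd x))"
    unfolding size_preserving_def using length_enc_vec_prime_emb by fastforce
  moreover have "size_preserving enc_act_in enc_vec
      (\<lambda>x. [if \<exists>w\<in>L. w \<noteq> [] \<and> snd x = [mean_prime_emb w] then 1 else -1, 0 :: rat])"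
    by (rule size_preserving_bounded[where B = 16]) (simp add: length_enc_vec length_enc_rat_sign)
  ultimately show ?thesis
    by (simp add: admissible_def lookup_transformer_def prime_emb_def)
qed

theorem proposition1:
  fixes L :: "bool list set"
  shows "\<exists>T. admissible T \<and> recognizes T L"
  using admissible_lookup_transformer recognizes_lookup_transformer by blast

end
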